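(* Let $1\le p<\infty$ and $-n/p\le\gamma\le1$ with $\gamma\ne0$. Assume the semigroup $\{e^{-t\mathcal L}\}_{t>0}$ has a kernel $\mathcal P_t(x,y)$ satisfying the Gaussian upper bound, and that for every $t>0$, $e^{-t\mathcal L}(\mathbf 1)(x)=1$ (i.e. $\int_{\mathbb R^n}\mathcal P_t(x,y)\,dy=1$) for almost every $x\in\mathbb R^n$. Then there is a constant $C>0$ such that for every $f\in\mathcal C^{p,\gamma}(\mathbb R^n)$, $$\sup_{\mathcal B}\frac{1}{m(\mathcal B)^{\gamma/n}}\Big(\frac1{m(\mathcal B)}\int_{\mathcal B}|f(x)-e^{-t_{\mathcal B}\mathcal L}f(x)|^p\,dx\Big)^{1/p}\le C\|f\|_{\mathcal C^{p,\gamma}},$$ i.e. $\|f\|_{\mathcal C^{p,\gamma}_{\mathcal L}}\le C\|f\|_{\mathcal C^{p,\gamma}}$.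
   Context: Gaussian upper bound: there are constants $C,A>0$ with $|\mathcal P_t(x,y)|\le C t^{-n/2}e^{-A|x-y|^2/t}$ for all $x,y$, $t>0$, and $e^{-t\mathcal L}f(x)=\int\mathcal P_t(x,y)f(y)\,dy$. For a ball $\mathcal B$ of radius $r_{\mathcal B}$, $t_{\mathcal B}=r_{\mathcal B}^2$. For $1\le p<\infty$, $-n/p\le\gamma\le 1$, the Morrey–Campanato space $\mathcal C^{p,\gamma}(\mathbb R^n)$ consists of locally integrable $f$ with $\|f\|_{\mathcal C^{p,\gamma}}=\sup_{\mathcal B}m(\mathcal B)^{-\gamma/n}\big(\frac1{m(\mathcal B)}\int_{\mathcal B}|f-f_{\mathcal B}|^p\big)^{1/p}<\infty$, where $f_{\mathcal B}=\frac1{m(\mathcal B)}\int_{\mathcal B}f$ and the sup is over all balls. The quantity $\|f\|_{\mathcal C^{p,\gamma}_{\mathcal L}}$ is the supremum displayed in the claim (the space $\mathcal C^{p,\gamma}_{\mathcal L}$ consists of $f$ with $\int|f(x)|^p(1+|x|)^{-n-\varrho}dx<\infty$ for some small $\varrho>0$ and finite such norm). *)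

theory Defs
  imports "HOL-Analysis.Analysis"
begin

text \<open>Lebesgue measure of a set (balls in R^n = 'a::euclidean_space, n = DIM('a)).\<close>
definition mleb :: "'a::euclidean_space set \<Rightarrow> real" where
  "mleb B = measure lborel B"

definition balls :: "'a::euclidean_space set set" where
  "balls = {ball x r | x r. r > 0}"

definition avg :: "('a::euclidean_space \<Rightarrow> real) \<Rightarrow> 'a set \<Rightarrow> real" where
  "avg f B = (1 / mleb B) * (\<integral>x\<in>B. f x \<partial>lborel)"

definition enn_root :: "real \<Rightarrow> ennreal \<Rightarrow> ennreal" where
  "enn_root p v = (if v = top then top else ennreal (enn2real v powr (1 / p)))"

definition locally_integrable :: "('a::euclidean_space \<Rightarrow> real) \<Rightarrow> bool" where
  "locally_integrable f \<longleftrightarrow> (\<forall>K. compact K \<longrightarrow> set_integrable lborel K f)"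

definition campanato_norm :: "real \<Rightarrow> real \<Rightarrow> ('a::euclidean_space \<Rightarrow> real) \<Rightarrow> ennreal" where
  "campanato_norm p \<gamma> f =
     (SUP B \<in> balls. ennreal (mleb B powr (- \<gamma> / DIM('a))) *
        enn_root p (ennreal (1 / mleb B) * (\<integral>\<^sup>+ x\<in>B. ennreal (\<bar>f x - avg f B\<bar> powr p) \<partial>lborel)))"

definition Campanato :: "real \<Rightarrow> real \<Rightarrow> ('a::euclidean_space \<Rightarrow> real) set" where
  "Campanato p \<gamma> = {f. locally_integrable f \<and> campanato_norm p \<gamma> f < top}"

text \<open>The semigroup e^{-tL} given by its kernel P t x y.\<close>
definition heat :: "(real \<Rightarrow> 'a::euclidean_space \<Rightarrow> 'a \<Rightarrow> real) \<Rightarrow> real \<Rightarrow> ('a \<Rightarrow> real) \<Rightarrow> 'a \<Rightarrow> real" where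
  "heat P t f x = (\<integral>y. P t x y * f y \<partial>lborel)"

definition tB :: "'a::euclidean_space set \<Rightarrow> real" where
  "tB B = (THE s. \<exists>x r. r > 0 \<and> B = ball x r \<and> s = r\<^sup>2)"

definition campanato_L_norm :: "(real \<Rightarrow> 'a::euclidean_space \<Rightarrow> 'a \<Rightarrow> real) \<Rightarrow> real \<Rightarrow> real \<Rightarrow> ('a \<Rightarrow> real) \<Rightarrow> ennreal" where
  "campanato_L_norm P p \<gamma> f =
     (SUP B \<in> balls. ennreal (mleb B powr (- \<gamma> / DIM('a))) *
        enn_root p (ennreal (1 / mleb B) *
           (\<integral>\<^sup>+ x\<in>B. ennreal (\<bar>f x - heat P (tB B) f x\<bar> powr p) \<partial>lborel)))"

end

theory Submission
  imports Defs
begin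

text \<open>Fix a ball B of radius r, so t_B = r^2. Since the kernel integrates to 1,
  f(x) - e^(-t_B L) f(x) = (f(x) - f_B) - \<integral> P_t_B(x, y) (f(y) - f_B) dy,
  and the first term is controlled by the Campanato norm directly. For the second, the Gaussian
  bound dominates the kernel, for x in B, by r^(-n) \<Sum>_k 4^(-(n+2)k) 1_(2^(k+1) B). Telescoping
  the averages of f over the balls 2^j B (this is where \<gamma> \<le> 1 enters) shows that the mean
  oscillation of f around f_B on 2^k B is at most 2^O(k) m(B)^(\<gamma>/n) \<parallel>f\<parallel>. The geometric decay
  of the kernel wins, so the kernel term is O(m(B)^(\<gamma>/n) \<parallel>f\<parallel>) uniformly in x \<in> B.\<close>

lemma exp_neg_le_power_divide:
  fixes x :: real
  assumes "x > 0" "m > 0"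
  shows "exp (- x) \<le> real m ^ m / x ^ m"
proof -
  have "(x / real m) ^ m \<le> (1 + x / real m) ^ m"
    using assms by (intro power_mono) auto
  also have "\<dots> \<le> exp x"
    using assms by (intro exp_ge_one_plus_x_over_n_power_n) auto
  finally have "x ^ m / real m ^ m \<le> exp x" by (simp add: power_divide)
  then show ?thesis
    using assms by (simp add: exp_minus field_simps)
qed

lemma Youngs_inequality_scaled:
  fixes u l p :: real
  assumes "u \<ge> 0" "l > 0" "p \<ge> 1"
  shows "u \<le> l powr (1 - p) * u powr p / p + l * (1 - 1 / p)"
proof (cases "p = 1")
  case False
  with assms have p: "p > 1" by simp
  define q where "q = p / (p - 1)"
  have q: "q > 1" "1 / p + 1 / q = 1" using p by (auto simp: q_def field_simps)
  have "u / l \<le> (u / l) powr p / p + 1 / q"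
    using Youngs_inequality[of p q "u / l" 1] assms p q by simp
  also have "1 / q = 1 - 1 / p" using q by simp
  finally have "l * (u / l) \<le> l * ((u / l) powr p / p + (1 - 1 / p))"
    using assms by (intro mult_left_mono) auto
  also have "\<dots> = l powr (1 - p) * u powr p / p + l * (1 - 1 / p)"
    using assms by (simp add: powr_divide powr_diff field_simps)
  finally show ?thesis using assms by simp
qed (use assms in simp)

lemma powr_le_two_powr_add:
  fixes a b c p :: real
  assumes "0 \<le> c" "c \<le> a + b" "a \<ge> 0" "b \<ge> 0" "p > 0"
  shows "c powr p \<le> 2 powr p * a powr p + 2 powr p * b powr p"
proof -
  have "c powr p \<le> (2 * max a b) powr p"
    using assms by (intro powr_mono2) auto
  also have "\<dots> = 2 powr p * max a b powr p"
    using assms by (simp add: powr_mult)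
  also have "max a b powr p \<le> a powr p + b powr p"
    using assms by (auto simp: max_def)
  finally show ?thesis by (simp add: distrib_left)
qed

lemma power2_powr_neg_half:
  fixes r :: real
  assumes "r > 0"
  shows "(r\<^sup>2) powr (- a / 2) = r powr (- a)"
proof -
  have "r\<^sup>2 = r powr 2"
    using assms by (simp add: powr_realpow)
  then show ?thesis
    by (simp add: powr_powr)
qed

lemma exp_neg_four_power_le:
  fixes A :: real and k m :: nat
  assumes A: "A > 0" and k: "k \<ge> 1" and m: "m > 0"
  shows "exp (- A * 4 ^ (k - 1)) \<le> real m ^ m * (4 / A) ^ m * (1 / 4 ^ m) ^ k"
proof -
  have "exp (- (A * 4 ^ (k - 1))) \<le> real m ^ m / (A * 4 ^ (k - 1)) ^ m"
    using A m by (intro exp_neg_le_power_divide) auto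
  also have "(A * 4 ^ (k - 1)) ^ m = A ^ m * (4 ^ k) ^ m / 4 ^ m"
  proof -
    have "(4::real) ^ k = 4 * 4 ^ (k - 1)"
      using k by (simp add: power_eq_if)
    then show ?thesis by (simp add: power_mult_distrib)
  qed
  also have "real m ^ m / (A ^ m * (4 ^ k) ^ m / 4 ^ m) = real m ^ m * (4 / A) ^ m * (1 / 4 ^ m) ^ k"
    using A by (simp add: field_simps flip: power_mult)
  finally show ?thesis by simp
qed

lemma dyadic_weight_le:
  "(1 / 4 ^ (n + 2)) ^ k * ((2::real) ^ (k + 1)) ^ n * 2 ^ (n + k + 3) \<le> 2 ^ (2 * n + 3) * (1 / 2) ^ k"
proof -
  define m where "m = n + 2"
  have "(1 / 4 ^ m) ^ k * ((2::real) ^ (k + 1)) ^ n * 2 ^ (n + k + 3)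
      = 2 ^ (2 * n + 3) * (2 ^ (n + 1) / 4 ^ m) ^ k"
    by (simp add: power_add field_simps flip: power_mult)
       (metis mult_2_right power_add)
  moreover have "(2::real) ^ (n + 1) / 4 ^ m \<le> 1 / 2"
  proof -
    have "(2::real) ^ (n + 2) \<le> 2 ^ (2 * (n + 2))"
      by (intro power_increasing) auto
    also have "\<dots> = 4 ^ m"
      by (simp add: power_mult m_def)
    finally show ?thesis by (simp add: field_simps)
  qed
  then have "(2 ^ (n + 1) / 4 ^ m) ^ k \<le> ((1::real) / 2) ^ k"
    by (intro power_mono) auto
  ultimately show ?thesis
    unfolding m_def by simp
qed

lemma dyadic_telescope_le:
  "(2::real) ^ (k + 1) + 2 ^ n * (2 ^ (k + 2) - 2) \<le> 2 ^ (n + k + 3)"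
proof -
  have "(2::real) ^ (k + 1) \<le> 2 ^ (k + 2)"
    by (rule power_increasing) auto
  also have "\<dots> \<le> 2 ^ n * 2 ^ (k + 2)"
    by simp
  moreover have "(2::real) ^ n * (2 ^ (k + 2) - 2) \<le> 2 ^ n * 2 ^ (k + 2)"
    by simp
  moreover have "(2::real) ^ (n + k + 3) = 2 * (2 ^ n * 2 ^ (k + 2))"
    by (simp add: power_add)
  ultimately show ?thesis
    by linarith
qed

section \<open>Balls in Euclidean space\<close>

lemma mleb_ball:
  "r \<ge> 0 \<Longrightarrow> mleb (ball (c::'a::euclidean_space) r) = unit_ball_vol DIM('a) * r ^ DIM('a)"
  unfolding mleb_def measure_def by (simp add: emeasure_ball)

lemma emeasure_ball_eq_mleb:
  "r \<ge> 0 \<Longrightarrow> emeasure lborel (ball (c::'a::euclidean_space) r) = ennreal (mleb (ball c r))"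
  by (simp add: emeasure_ball mleb_ball)

lemma mleb_ball_pos: "r > 0 \<Longrightarrow> mleb (ball (c::'a::euclidean_space) r) > 0"
  by (simp add: mleb_ball)

lemma mleb_ball_powr:
  assumes "r > 0"
  shows "mleb (ball (c::'a::euclidean_space) r) powr a
           = unit_ball_vol DIM('a) powr a * r powr (a * DIM('a))"
proof -
  have "(r ^ DIM('a)) powr a = r powr (a * DIM('a))"
    using assms by (simp add: powr_realpow[symmetric] powr_powr mult.commute)
  then show ?thesis
    using assms by (simp add: mleb_ball powr_mult)
qed

definition ball_scale :: "nat \<Rightarrow> real \<Rightarrow> real \<Rightarrow> real" where
  "ball_scale n \<gamma> r = unit_ball_vol n powr (\<gamma> / n) * r powr \<gamma>"

lemma mleb_ball_powr_eq_ball_scale: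
  "r > 0 \<Longrightarrow> mleb (ball (c::'a::euclidean_space) r) powr (\<gamma> / DIM('a)) = ball_scale DIM('a) \<gamma> r"
  unfolding ball_scale_def by (simp add: mleb_ball_powr)

lemma mleb_ball_powr_neg_mult_ball_scale:
  assumes "r > 0"
  shows "mleb (ball (c::'a::euclidean_space) r) powr (- \<gamma> / DIM('a)) * ball_scale DIM('a) \<gamma> r = 1"
proof -
  have "mleb (ball c r) powr (- \<gamma> / DIM('a)) * mleb (ball c r) powr (\<gamma> / DIM('a)) = 1"
    using mleb_ball_pos[OF assms, of c] by (simp add: powr_minus)
  then show ?thesis
    using mleb_ball_powr_eq_ball_scale[OF assms, of c \<gamma>] by simp
qed

lemma ball_scale_pos:
  assumes "r > 0"
  shows "ball_scale n \<gamma> r > 0"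
proof -
  have "unit_ball_vol (real n) \<noteq> 0"
    using unit_ball_vol_pos[of "real n"] by (metis of_nat_0_le_iff order_less_irrefl)
  with assms show ?thesis
    unfolding ball_scale_def by simp
qed

lemma ball_scale_dyadic_le:
  assumes "r > 0" "\<gamma> \<le> 1"
  shows "ball_scale n \<gamma> (2 ^ k * r) \<le> 2 ^ k * ball_scale n \<gamma> r"
proof -
  have "((2::real) ^ k) powr \<gamma> \<le> (2 ^ k) powr 1"
    using assms by (intro powr_mono) auto
  then show ?thesis
    using assms unfolding ball_scale_def by (simp add: powr_mult mult_left_mono mult_right_mono mult_ac)
qed

lemma tB_ball: "r > 0 \<Longrightarrow> tB (ball (c::'a::euclidean_space) r) = r\<^sup>2"
  unfolding tB_def by (rule the_equality) (auto simp: ball_eq_ball_iff)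

lemma ball_in_balls: "r > 0 \<Longrightarrow> ball (c::'a::euclidean_space) r \<in> balls"
  unfolding balls_def by blast

section \<open>Averages and oscillation integrals\<close>

lemma locally_integrable_imp_borel_measurable:
  assumes "locally_integrable (f::'a::euclidean_space \<Rightarrow> real)"
  shows "f \<in> borel_measurable lborel"
proof (rule borel_measurable_LIMSEQ_real)
  show "(\<lambda>x. indicator (cball 0 (real k)) x *\<^sub>R f x) \<in> borel_measurable lborel" for k
    using assms compact_cball unfolding locally_integrable_def set_integrable_def
    by (blast intro: borel_measurable_integrable)
  show "(\<lambda>k. indicator (cball 0 (real k)) x *\<^sub>R f x) \<longlonglongrightarrow> f x" for x
  proof (rule tendsto_eventually)
    obtain k0 :: nat where "norm x \<le> real k0" using real_arch_simple by blast
    then show "\<forall>\<^sub>F k in sequentially. indicator (cball 0 (real k)) x *\<^sub>R f x = f x"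
      unfolding eventually_sequentially
      by (intro exI[of _ k0]) (auto simp: indicator_def dist_norm)
  qed
qed

lemma locally_integrable_set_integrable_ball:
  assumes "locally_integrable (f::'a::euclidean_space \<Rightarrow> real)"
  shows "set_integrable lborel (ball c r) f"
proof (rule set_integrable_subset)
  show "set_integrable lborel (cball c r) f"
    using assms compact_cball unfolding locally_integrable_def by blast
qed auto

lemma enn_root_le_ennreal_powr:
  assumes "v \<le> ennreal V" "V \<ge> 0" "p > 0"
  shows "enn_root p v \<le> ennreal (V powr (1 / p))"
proof -
  from assms(1) obtain v' where v': "v = ennreal v'" "v' \<ge> 0"
    by (cases v rule: ennreal_cases) (auto simp: top_unique)
  with assms have "v' powr (1 / p) \<le> V powr (1 / p)"
    by (intro powr_mono2) auto
  with v' show ?thesis by (simp add: enn_root_def)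
qed

lemma le_of_enn_root_average_le:
  fixes I :: ennreal
  assumes le: "ennreal a * enn_root p (ennreal (1 / \<mu>) * I) \<le> ennreal M"
    and a: "a > 0" and \<mu>: "\<mu> > 0" and p: "p > 0" and M: "M \<ge> 0"
  shows "I \<le> ennreal (\<mu> * (M / a) powr p)"
proof -
  have "I \<noteq> top"
  proof
    assume "I = top"
    then have "ennreal a * enn_root p (ennreal (1 / \<mu>) * I) = top"
      using a \<mu> by (simp add: ennreal_mult_top enn_root_def)
    with le show False
      by (simp add: top_unique)
  qed
  then obtain i where i: "I = ennreal i" "i \<ge> 0"
    by (cases I rule: ennreal_cases) auto
  have "a * (i / \<mu>) powr (1 / p) \<le> M"
    using le i \<mu> a M by (simp add: enn_root_def ennreal_mult''[symmetric] divide_inverse mult.commute)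
  then have "((i / \<mu>) powr (1 / p)) powr p \<le> (M / a) powr p"
    using a p by (intro powr_mono2) (auto simp: field_simps)
  then have "i / \<mu> \<le> (M / a) powr p"
    using p i \<mu> by (simp add: powr_powr)
  with i \<mu> show ?thesis
    by (simp add: field_simps)
qed

text \<open>Hoelder's inequality on E in disguise: integrate Young's inequality
  u \<le> l^(1-p) u^p / p + l (1 - 1/p) over E.\<close>
lemma nn_integral_le_of_nn_integral_powr_le_pos:
  fixes g :: "'b \<Rightarrow> real"
  assumes [measurable]: "g \<in> borel_measurable M" "E \<in> sets M"
    and g: "\<And>x. g x \<ge> 0"
    and E: "emeasure M E = ennreal \<mu>" and \<mu>: "\<mu> \<ge> 0"
    and p: "p \<ge> 1" and l: "l > 0"
    and Ip: "(\<integral>\<^sup>+x\<in>E. ennreal (g x powr p) \<partial>M) \<le> ennreal (\<mu> * l powr p)"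
  shows "(\<integral>\<^sup>+x\<in>E. ennreal (g x) \<partial>M) \<le> ennreal (\<mu> * l)"
proof -
  define a where "a = l powr (1 - p) / p"
  define b where "b = l * (1 - 1 / p)"
  have a: "a \<ge> 0" and b: "b \<ge> 0" unfolding a_def b_def using p l by auto
  have "(\<integral>\<^sup>+x\<in>E. ennreal (g x) \<partial>M)
      \<le> (\<integral>\<^sup>+x. ennreal a * (ennreal (g x powr p) * indicator E x) + ennreal b * indicator E x \<partial>M)"
  proof (intro nn_integral_mono)
    fix x
    have "g x \<le> a * g x powr p + b"
      using Youngs_inequality_scaled[OF g l p] unfolding a_def b_def by simp
    then show "ennreal (g x) * indicator E x
        \<le> ennreal a * (ennreal (g x powr p) * indicator E x) + ennreal b * indicator E x"
      using a b
      by (auto simp: indicator_def ennreal_mult''[symmetric] ennreal_plus[symmetric] simp del: ennreal_plus)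
  qed
  also have "\<dots> = ennreal a * (\<integral>\<^sup>+x\<in>E. ennreal (g x powr p) \<partial>M) + ennreal b * emeasure M E"
    by (subst nn_integral_add) (auto simp: nn_integral_cmult)
  also have "\<dots> \<le> ennreal a * ennreal (\<mu> * l powr p) + ennreal b * ennreal \<mu>"
    using Ip E by (intro add_mono mult_left_mono) auto
  also have "\<dots> = ennreal (a * (\<mu> * l powr p) + b * \<mu>)"
    using a b \<mu> by (simp add: ennreal_mult''[symmetric] ennreal_plus[symmetric] del: ennreal_plus)
  also have "a * (\<mu> * l powr p) + b * \<mu> = \<mu> * l"
    unfolding a_def b_def using l p by (simp add: powr_diff field_simps)
  finally show ?thesis .
qed

lemma nn_integral_le_of_nn_integral_powr_le:
  fixes g :: "'b \<Rightarrow> real"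
  assumes [measurable]: "g \<in> borel_measurable M" "E \<in> sets M"
    and g: "\<And>x. g x \<ge> 0"
    and E: "emeasure M E = ennreal \<mu>" and \<mu>: "\<mu> > 0"
    and p: "p \<ge> 1" and l0: "l0 \<ge> 0"
    and Ip: "(\<integral>\<^sup>+x\<in>E. ennreal (g x powr p) \<partial>M) \<le> ennreal (\<mu> * l0 powr p)"
  shows "(\<integral>\<^sup>+x\<in>E. ennreal (g x) \<partial>M) \<le> ennreal (\<mu> * l0)"
proof (rule ennreal_le_epsilon)
  fix e :: real
  assume e: "0 < e"
  define l where "l = l0 + e / \<mu>"
  have "e / \<mu> > 0" using e \<mu> by simp
  then have l: "l > 0" "l0 \<le> l" unfolding l_def using l0 by auto
  have "l0 powr p \<le> l powr p" using l l0 p by (intro powr_mono2) auto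
  then have "ennreal (\<mu> * l0 powr p) \<le> ennreal (\<mu> * l powr p)"
    using \<mu> by (intro ennreal_leI mult_left_mono) auto
  with Ip have "(\<integral>\<^sup>+x\<in>E. ennreal (g x powr p) \<partial>M) \<le> ennreal (\<mu> * l powr p)"
    by (rule order_trans)
  then have "(\<integral>\<^sup>+x\<in>E. ennreal (g x) \<partial>M) \<le> ennreal (\<mu> * l)"
    using \<mu> by (intro nn_integral_le_of_nn_integral_powr_le_pos[OF assms(1-4) _ p l(1)]) auto
  also have "\<mu> * l = \<mu> * l0 + e"
    unfolding l_def using \<mu> by (simp add: field_simps)
  finally show "(\<integral>\<^sup>+x\<in>E. ennreal (g x) \<partial>M) \<le> ennreal (\<mu> * l0) + ennreal e"
    using \<mu> l0 e by (simp add: ennreal_plus[symmetric] del: ennreal_plus)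
qed

lemma nn_integral_abs_diff_le_add:
  fixes g :: "'b \<Rightarrow> real"
  assumes [measurable]: "g \<in> borel_measurable M" "E \<in> sets M"
  shows "(\<integral>\<^sup>+x\<in>E. ennreal \<bar>g x - c\<bar> \<partial>M)
           \<le> (\<integral>\<^sup>+x\<in>E. ennreal \<bar>g x - a\<bar> \<partial>M) + ennreal \<bar>a - c\<bar> * emeasure M E"
proof -
  have "(\<integral>\<^sup>+x\<in>E. ennreal \<bar>g x - c\<bar> \<partial>M)
      \<le> (\<integral>\<^sup>+x. ennreal \<bar>g x - a\<bar> * indicator E x + ennreal \<bar>a - c\<bar> * indicator E x \<partial>M)"
    by (intro nn_integral_mono)
       (auto simp: indicator_def ennreal_plus[symmetric] simp del: ennreal_plus intro!: ennreal_leI)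
  also have "\<dots> = (\<integral>\<^sup>+x\<in>E. ennreal \<bar>g x - a\<bar> \<partial>M) + ennreal \<bar>a - c\<bar> * emeasure M E"
    by (subst nn_integral_add) (auto simp: nn_integral_cmult_indicator)
  finally show ?thesis .
qed

lemma mleb_mult_abs_avg_diff_le:
  fixes f :: "'a::euclidean_space \<Rightarrow> real"
  assumes int: "set_integrable lborel F f" and F: "F \<in> sets lborel"
    and em: "emeasure lborel F = ennreal (mleb F)" and pos: "mleb F > 0"
  shows "ennreal (mleb F * \<bar>avg f F - a\<bar>) \<le> (\<integral>\<^sup>+x\<in>F. ennreal \<bar>f x - a\<bar> \<partial>lborel)"
proof -
  have meas: "measure lborel F = mleb F"
    using em pos by (simp add: measure_def)
  have const: "set_integrable lborel F (\<lambda>_. a)"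
    using em F by (simp add: set_integrable_def integrable_real_mult_indicator)
  have "mleb F * (avg f F - a) = (LINT x:F|lborel. f x) - (LINT x:F|lborel. a)"
    using pos F em meas by (simp add: avg_def set_integral_const field_simps)
  also have "\<dots> = (LINT x:F|lborel. f x - a)"
    using int const by simp
  finally have eq: "mleb F * (avg f F - a) = (LINT x:F|lborel. f x - a)" .
  have "integrable lborel (\<lambda>x. indicator F x *\<^sub>R (f x - a))"
    using int const unfolding set_integrable_def[symmetric] by simp
  then have "ennreal (norm (LINT x:F|lborel. f x - a))
      \<le> (\<integral>\<^sup>+x. norm (indicator F x *\<^sub>R (f x - a)) \<partial>lborel)"
    unfolding set_lebesgue_integral_def by (rule integral_norm_bound_ennreal)
  also have "\<dots> = (\<integral>\<^sup>+x\<in>F. ennreal \<bar>f x - a\<bar> \<partial>lborel)"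
    by (intro nn_integral_cong) (auto simp: indicator_def)
  finally show ?thesis
    using pos by (simp add: eq[symmetric] abs_mult)
qed

lemma abs_integral_kernel_diff_le:
  fixes K g :: "'b \<Rightarrow> real"
  assumes [measurable]: "K \<in> borel_measurable M" "g \<in> borel_measurable M"
    and one: "(\<integral>y. K y \<partial>M) = 1"
    and bound: "(\<integral>\<^sup>+y. ennreal (\<bar>K y\<bar> * \<bar>g y - c\<bar>) \<partial>M) \<le> ennreal b" and b: "b \<ge> 0"
  shows "\<bar>(\<integral>y. K y * g y \<partial>M) - c\<bar> \<le> b"
proof -
  have K: "integrable M K"
    using one not_integrable_integral_eq by fastforce
  have norm_eq: "(\<integral>\<^sup>+y. ennreal (norm (K y * (g y - c))) \<partial>M) = (\<integral>\<^sup>+y. ennreal (\<bar>K y\<bar> * \<bar>g y - c\<bar>) \<partial>M)"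
    by (simp add: abs_mult)
  have Kg: "integrable M (\<lambda>y. K y * (g y - c))"
    using bound le_less_trans[OF bound ennreal_less_top] norm_eq
    by (intro integrableI_bounded) auto
  have "(\<integral>y. K y * g y \<partial>M) = (\<integral>y. K y * (g y - c) + c * K y \<partial>M)"
    by (intro Bochner_Integration.integral_cong) (auto simp: algebra_simps)
  also have "\<dots> = (\<integral>y. K y * (g y - c) \<partial>M) + c"
    using K Kg one by simp
  finally have split: "(\<integral>y. K y * g y \<partial>M) - c = (\<integral>y. K y * (g y - c) \<partial>M)"
    by simp
  have "ennreal (norm (\<integral>y. K y * (g y - c) \<partial>M)) \<le> (\<integral>\<^sup>+y. norm (K y * (g y - c)) \<partial>M)"
    by (rule integral_norm_bound_ennreal[OF Kg])
  also have "\<dots> \<le> ennreal b"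
    using bound norm_eq by simp
  finally show ?thesis
    using b by (simp add: split)
qed

lemma nn_integral_powr_le_of_AE_le_add:
  fixes g h :: "'b \<Rightarrow> real"
  assumes [measurable]: "g \<in> borel_measurable M" "B \<in> sets M"
    and p: "p \<ge> 1" and Y: "Y \<ge> 0" and \<mu>: "\<mu> \<ge> 0"
    and B: "emeasure M B = ennreal \<mu>"
    and hg: "AE x in M. x \<in> B \<longrightarrow> \<bar>h x\<bar> \<le> \<bar>g x\<bar> + Y"
    and Ig: "(\<integral>\<^sup>+x\<in>B. ennreal (\<bar>g x\<bar> powr p) \<partial>M) \<le> ennreal (\<mu> * X powr p)"
  shows "(\<integral>\<^sup>+x\<in>B. ennreal (\<bar>h x\<bar> powr p) \<partial>M) \<le> ennreal (\<mu> * (2 powr p * (X powr p + Y powr p)))"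
proof -
  have "(\<integral>\<^sup>+x\<in>B. ennreal (\<bar>h x\<bar> powr p) \<partial>M)
      \<le> (\<integral>\<^sup>+x. ennreal (2 powr p) * (ennreal (\<bar>g x\<bar> powr p) * indicator B x)
                + ennreal (2 powr p * Y powr p) * indicator B x \<partial>M)"
  proof (rule nn_integral_mono_AE)
    show "AE x in M. ennreal (\<bar>h x\<bar> powr p) * indicator B x
        \<le> ennreal (2 powr p) * (ennreal (\<bar>g x\<bar> powr p) * indicator B x)
          + ennreal (2 powr p * Y powr p) * indicator B x"
      using hg
    proof eventually_elim
      case (elim x)
      then show ?case
        using powr_le_two_powr_add[of "\<bar>h x\<bar>" "\<bar>g x\<bar>" Y p] Y p
        by (cases "x \<in> B")
           (auto simp: ennreal_mult''[symmetric] ennreal_plus[symmetric] simp del: ennreal_plus)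
    qed
  qed
  also have "\<dots> = ennreal (2 powr p) * (\<integral>\<^sup>+x\<in>B. ennreal (\<bar>g x\<bar> powr p) \<partial>M)
                  + ennreal (2 powr p * Y powr p) * emeasure M B"
    by (subst nn_integral_add) (auto simp: nn_integral_cmult nn_integral_cmult_indicator)
  also have "\<dots> \<le> ennreal (2 powr p) * ennreal (\<mu> * X powr p) + ennreal (2 powr p * Y powr p) * ennreal \<mu>"
    using Ig B by (intro add_mono mult_left_mono) auto
  also have "\<dots> = ennreal (2 powr p * (\<mu> * X powr p) + 2 powr p * Y powr p * \<mu>)"
    using \<mu> by (simp add: ennreal_mult''[symmetric] ennreal_plus[symmetric] del: ennreal_plus)
  also have "2 powr p * (\<mu> * X powr p) + 2 powr p * Y powr p * \<mu> = \<mu> * (2 powr p * (X powr p + Y powr p))"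
    by (simp add: algebra_simps)
  finally show ?thesis .
qed

lemma enn_root_average_le_of_AE_le_add:
  fixes g h :: "'b \<Rightarrow> real"
  assumes [measurable]: "g \<in> borel_measurable M" "B \<in> sets M"
    and p: "p \<ge> 1" and X: "X \<ge> 0" and Y: "Y \<ge> 0" and \<mu>: "\<mu> > 0"
    and B: "emeasure M B = ennreal \<mu>"
    and hg: "AE x in M. x \<in> B \<longrightarrow> \<bar>h x\<bar> \<le> \<bar>g x\<bar> + Y"
    and Ig: "(\<integral>\<^sup>+x\<in>B. ennreal (\<bar>g x\<bar> powr p) \<partial>M) \<le> ennreal (\<mu> * X powr p)"
  shows "enn_root p (ennreal (1 / \<mu>) * (\<integral>\<^sup>+x\<in>B. ennreal (\<bar>h x\<bar> powr p) \<partial>M))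
           \<le> ennreal (4 * (X + Y))"
proof -
  define V where "V = 2 powr (p + 1) * (X + Y) powr p"
  have "X powr p \<le> (X + Y) powr p" "Y powr p \<le> (X + Y) powr p"
    using X Y p by (auto intro: powr_mono2)
  then have "\<mu> * (2 powr p * (X powr p + Y powr p)) \<le> \<mu> * V"
    unfolding V_def using \<mu> by (intro mult_left_mono) (auto simp: powr_add)
  then have "(\<integral>\<^sup>+x\<in>B. ennreal (\<bar>h x\<bar> powr p) \<partial>M) \<le> ennreal (\<mu> * V)"
    using nn_integral_powr_le_of_AE_le_add[OF assms(1,2) p Y _ B hg Ig] \<mu>
    by (meson ennreal_leI less_imp_le order_trans)
  then have "ennreal (1 / \<mu>) * (\<integral>\<^sup>+x\<in>B. ennreal (\<bar>h x\<bar> powr p) \<partial>M) \<le> ennreal (1 / \<mu>) * ennreal (\<mu> * V)"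
    by (rule mult_left_mono) simp
  also have "\<dots> = ennreal V"
    using \<mu> by (simp add: V_def ennreal_mult''[symmetric])
  finally have "enn_root p (ennreal (1 / \<mu>) * (\<integral>\<^sup>+x\<in>B. ennreal (\<bar>h x\<bar> powr p) \<partial>M))
      \<le> ennreal (V powr (1 / p))"
    using p by (intro enn_root_le_ennreal_powr) (auto simp: V_def)
  also have "V powr (1 / p) = 2 powr ((p + 1) / p) * (X + Y)"
    unfolding V_def using p X Y by (simp add: powr_mult powr_powr)
  also have "\<dots> \<le> 2 powr 2 * (X + Y)"
    using p X Y by (intro mult_right_mono powr_mono) (auto simp: field_simps)
  finally show ?thesis by (simp add: ennreal_leI)
qed

section \<open>Gaussian kernels on dyadic balls\<close>

text \<open>The exponent n + 2 makes the decay 4^(-(n+2)k) of the Gaussian on the dyadic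
  annuli beat the growth 2^((n+1)k) of the volumes of the dyadic balls.\<close>
definition gauss_dyadic_const :: "nat \<Rightarrow> real \<Rightarrow> real" where
  "gauss_dyadic_const n A = max 1 (real (n + 2) ^ (n + 2) * (4 / A) ^ (n + 2))"

lemma dist_ge_outside_dyadic_ball:
  fixes x x0 y :: "'a::metric_space"
  assumes x: "x \<in> ball x0 r" and y: "y \<notin> ball x0 (2 ^ k * r)" and k: "k \<ge> 1" and r: "r > 0"
  shows "dist x y \<ge> 2 ^ (k - 1) * r"
proof -
  have "(2::real) ^ k = 2 * 2 ^ (k - 1)"
    using k by (simp add: power_eq_if)
  then have "(2::real) ^ k * r = 2 * (2 ^ (k - 1) * r)"
    by simp
  moreover have "r \<le> 2 ^ (k - 1) * r"
    using r by simp
  moreover have "2 ^ k * r \<le> dist x0 x + dist x y"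
    using x y dist_triangle[of x0 y x] by (simp add: dist_commute)
  moreover have "dist x0 x < r"
    using x by simp
  ultimately show ?thesis
    by linarith
qed

lemma exp_gauss_le_outside_dyadic_ball:
  fixes x x0 y :: "'a::euclidean_space"
  assumes A: "A > 0" and r: "r > 0" and x: "x \<in> ball x0 r"
    and y: "y \<notin> ball x0 (2 ^ k * r)" and k: "k \<ge> 1"
  shows "exp (- A * (dist x y)\<^sup>2 / r\<^sup>2)
           \<le> gauss_dyadic_const DIM('a) A * (1 / 4 ^ (DIM('a) + 2)) ^ k"
proof -
  have "(2 ^ (k - 1) * r)\<^sup>2 \<le> (dist x y)\<^sup>2"
    using dist_ge_outside_dyadic_ball[OF x y k r] r by (intro power_mono) auto
  moreover have "(2 ^ (k - 1) * r)\<^sup>2 = 4 ^ (k - 1) * r\<^sup>2"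
    by (simp add: power_mult_distrib power2_eq_square flip: power_mult_distrib)
  ultimately have "A * 4 ^ (k - 1) \<le> A * (dist x y)\<^sup>2 / r\<^sup>2"
    using A r by (simp add: field_simps)
  then have "exp (- A * (dist x y)\<^sup>2 / r\<^sup>2) \<le> exp (- A * 4 ^ (k - 1))"
    by simp
  also have "\<dots> \<le> real (DIM('a) + 2) ^ (DIM('a) + 2) * (4 / A) ^ (DIM('a) + 2) * (1 / 4 ^ (DIM('a) + 2)) ^ k"
    using A k by (intro exp_neg_four_power_le) auto
  also have "\<dots> \<le> gauss_dyadic_const DIM('a) A * (1 / 4 ^ (DIM('a) + 2)) ^ k"
    unfolding gauss_dyadic_const_def by (intro mult_right_mono) auto
  finally show ?thesis .
qed

lemma exp_gauss_le_dyadic_weight: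
  fixes x x0 y :: "'a::euclidean_space"
  assumes A: "A > 0" and r: "r > 0" and x: "x \<in> ball x0 r"
  obtains k where "y \<in> ball x0 (2 ^ (k + 1) * r)"
    and "exp (- A * (dist x y)\<^sup>2 / r\<^sup>2) \<le> gauss_dyadic_const DIM('a) A * (1 / 4 ^ (DIM('a) + 2)) ^ k"
proof -
  obtain k0 where "dist x0 y / r < 2 ^ k0"
    using real_arch_pow[of 2 "dist x0 y / r"] by auto
  then have "dist x0 y < 2 ^ k0 * r"
    using r by (simp add: field_simps)
  also have "\<dots> \<le> 2 ^ (k0 + 1) * r"
    using r by simp
  finally have "y \<in> ball x0 (2 ^ (k0 + 1) * r)"
    by simp
  define k where "k = (LEAST k. y \<in> ball x0 (2 ^ (k + 1) * r))"
  have "y \<in> ball x0 (2 ^ (k + 1) * r)"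
    unfolding k_def by (rule LeastI) fact
  moreover have "exp (- A * (dist x y)\<^sup>2 / r\<^sup>2) \<le> gauss_dyadic_const DIM('a) A * (1 / 4 ^ (DIM('a) + 2)) ^ k"
  proof (cases "k = 0")
    case True
    have "exp (- A * (dist x y)\<^sup>2 / r\<^sup>2) \<le> 1"
      using A r by simp
    moreover have "1 \<le> gauss_dyadic_const DIM('a) A"
      unfolding gauss_dyadic_const_def by simp
    ultimately have "exp (- A * (dist x y)\<^sup>2 / r\<^sup>2) \<le> gauss_dyadic_const DIM('a) A"
      by linarith
    with True show ?thesis
      by simp
  next
    case False
    then have "y \<notin> ball x0 (2 ^ (k - 1 + 1) * r)"
      unfolding k_def by (intro not_less_Least) (simp add: k_def)
    with False show ?thesis
      using A r x by (intro exp_gauss_le_outside_dyadic_ball) auto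
  qed
  ultimately show ?thesis
    by (rule that)
qed

lemma exp_gauss_le_dyadic_sum:
  fixes x x0 y :: "'a::euclidean_space"
  assumes A: "A > 0" and r: "r > 0" and x: "x \<in> ball x0 r"
  shows "ennreal (exp (- A * (dist x y)\<^sup>2 / r\<^sup>2))
           \<le> (\<Sum>k. ennreal (gauss_dyadic_const DIM('a) A * (1 / 4 ^ (DIM('a) + 2)) ^ k)
                    * indicator (ball x0 (2 ^ (k + 1) * r)) y)"
proof -
  obtain k where "y \<in> ball x0 (2 ^ (k + 1) * r)"
    and "exp (- A * (dist x y)\<^sup>2 / r\<^sup>2) \<le> gauss_dyadic_const DIM('a) A * (1 / 4 ^ (DIM('a) + 2)) ^ k"
    using exp_gauss_le_dyadic_weight[OF A r x] .
  then have "ennreal (exp (- A * (dist x y)\<^sup>2 / r\<^sup>2))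
      \<le> (\<Sum>i\<in>{k}. ennreal (gauss_dyadic_const DIM('a) A * (1 / 4 ^ (DIM('a) + 2)) ^ i)
                    * indicator (ball x0 (2 ^ (i + 1) * r)) y)"
    by (simp add: ennreal_leI)
  also have "\<dots> \<le> (\<Sum>i. ennreal (gauss_dyadic_const DIM('a) A * (1 / 4 ^ (DIM('a) + 2)) ^ i)
                    * indicator (ball x0 (2 ^ (i + 1) * r)) y)"
    by (intro sum_le_suminf summableI) auto
  finally show ?thesis .
qed

lemma nn_integral_gauss_le_dyadic_sum:
  fixes x x0 :: "'a::euclidean_space" and g :: "'a \<Rightarrow> ennreal"
  assumes [measurable]: "g \<in> borel_measurable lborel"
    and A: "A > 0" and r: "r > 0" and x: "x \<in> ball x0 r"
  shows "(\<integral>\<^sup>+y. ennreal (exp (- A * (dist x y)\<^sup>2 / r\<^sup>2)) * g y \<partial>lborel)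
           \<le> (\<Sum>k. ennreal (gauss_dyadic_const DIM('a) A * (1 / 4 ^ (DIM('a) + 2)) ^ k)
                    * (\<integral>\<^sup>+y\<in>ball x0 (2 ^ (k + 1) * r). g y \<partial>lborel))"
proof -
  define c where "c = (\<lambda>k::nat. ennreal (gauss_dyadic_const DIM('a) A * (1 / 4 ^ (DIM('a) + 2)) ^ k))"
  define E where "E = (\<lambda>k::nat. ball x0 (2 ^ (k + 1) * r))"
  have [measurable]: "E k \<in> sets lborel" for k
    unfolding E_def by simp
  have "(\<integral>\<^sup>+y. ennreal (exp (- A * (dist x y)\<^sup>2 / r\<^sup>2)) * g y \<partial>lborel)
      \<le> (\<integral>\<^sup>+y. (\<Sum>k. c k * indicator (E k) y) * g y \<partial>lborel)"
    unfolding c_def E_def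
    by (intro nn_integral_mono mult_right_mono exp_gauss_le_dyadic_sum[OF A r x]) simp
  also have "\<dots> = (\<integral>\<^sup>+y. (\<Sum>k. c k * indicator (E k) y * g y) \<partial>lborel)"
    by (simp only: ennreal_suminf_multc)
  also have "\<dots> = (\<Sum>k. c k * (\<integral>\<^sup>+y\<in>E k. g y \<partial>lborel))"
    by (subst nn_integral_suminf) (auto simp: nn_integral_cmult mult_ac)
  finally show ?thesis unfolding c_def E_def .
qed

definition gauss_oscillation_const :: "nat \<Rightarrow> real \<Rightarrow> real" where
  "gauss_oscillation_const n A = 2 ^ (2 * n + 4) * gauss_dyadic_const n A * unit_ball_vol n"

lemma gauss_oscillation_const_nonneg: "gauss_oscillation_const n A \<ge> 0"
  unfolding gauss_oscillation_const_def gauss_dyadic_const_def by simp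

section \<open>Functions of bounded Campanato norm\<close>

locale campanato_bounded =
  fixes f :: "'a::euclidean_space \<Rightarrow> real" and p \<gamma> M :: real
  assumes locally_integrable: "locally_integrable f"
    and campanato_norm_le: "campanato_norm p \<gamma> f \<le> ennreal M"
    and M_nonneg: "M \<ge> 0" and p_ge_1: "p \<ge> 1" and gamma_le_1: "\<gamma> \<le> 1"
begin

lemma borel_measurable_f [measurable]: "f \<in> borel_measurable lborel"
  using locally_integrable by (rule locally_integrable_imp_borel_measurable)

lemma M_ball_scale_nonneg: "r > 0 \<Longrightarrow> M * ball_scale DIM('a) \<gamma> r \<ge> 0"
  using M_nonneg less_imp_le[OF ball_scale_pos] by simp

lemma oscillation_powr_ball_le:
  assumes r: "r > 0"
  shows "(\<integral>\<^sup>+x\<in>ball c r. ennreal (\<bar>f x - avg f (ball c r)\<bar> powr p) \<partial>lborel)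
           \<le> ennreal (mleb (ball c r) * (M * ball_scale DIM('a) \<gamma> r) powr p)"
proof -
  define \<mu> where "\<mu> = mleb (ball c r)"
  have "ball c r \<in> balls"
    using r by (rule ball_in_balls)
  then have "ennreal (\<mu> powr (- \<gamma> / DIM('a))) * enn_root p (ennreal (1 / \<mu>) *
      (\<integral>\<^sup>+x\<in>ball c r. ennreal (\<bar>f x - avg f (ball c r)\<bar> powr p) \<partial>lborel)) \<le> ennreal M"
    using campanato_norm_le unfolding campanato_norm_def \<mu>_def
    by (meson SUP_upper order_trans)
  then have "(\<integral>\<^sup>+x\<in>ball c r. ennreal (\<bar>f x - avg f (ball c r)\<bar> powr p) \<partial>lborel)
      \<le> ennreal (\<mu> * (M / \<mu> powr (- \<gamma> / DIM('a))) powr p)"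
    using mleb_ball_pos[OF r, of c] M_nonneg p_ge_1 unfolding \<mu>_def
    by (intro le_of_enn_root_average_le) auto
  also have "M / \<mu> powr (- \<gamma> / DIM('a)) = M * ball_scale DIM('a) \<gamma> r"
    using inverse_unique[OF mleb_ball_powr_neg_mult_ball_scale[OF r, of c \<gamma>]] unfolding \<mu>_def
    by (simp add: divide_inverse)
  finally show ?thesis
    unfolding \<mu>_def .
qed

lemma oscillation_ball_le:
  assumes r: "r > 0"
  shows "(\<integral>\<^sup>+x\<in>ball c r. ennreal \<bar>f x - avg f (ball c r)\<bar> \<partial>lborel)
           \<le> ennreal (mleb (ball c r) * (M * ball_scale DIM('a) \<gamma> r))"
proof (rule nn_integral_le_of_nn_integral_powr_le[where g = "\<lambda>x. \<bar>f x - avg f (ball c r)\<bar>"])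
  show "0 \<le> M * ball_scale DIM('a) \<gamma> r"
    using r by (rule M_ball_scale_nonneg)
qed (use r p_ge_1 oscillation_powr_ball_le[OF r] in \<open>auto simp: emeasure_ball_eq_mleb mleb_ball_pos\<close>)

lemma abs_avg_ball_double_diff_le:
  assumes s: "s > 0"
  shows "\<bar>avg f (ball c s) - avg f (ball c (2 * s))\<bar> \<le> 2 ^ DIM('a) * M * ball_scale DIM('a) \<gamma> (2 * s)"
proof -
  define F where "F = ball c s"
  define F' where "F' = ball c (2 * s)"
  have mF: "mleb F > 0"
    unfolding F_def using s by (rule mleb_ball_pos)
  have mF': "mleb F' = 2 ^ DIM('a) * mleb F"
    unfolding F_def F'_def using s by (simp add: mleb_ball power_mult_distrib)
  have "ennreal (mleb F * \<bar>avg f F - avg f F'\<bar>) \<le> (\<integral>\<^sup>+x\<in>F. ennreal \<bar>f x - avg f F'\<bar> \<partial>lborel)"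
    unfolding F_def using s mF[unfolded F_def]
    by (intro mleb_mult_abs_avg_diff_le locally_integrable_set_integrable_ball[OF locally_integrable])
       (auto simp: emeasure_ball_eq_mleb)
  also have "\<dots> \<le> (\<integral>\<^sup>+x\<in>F'. ennreal \<bar>f x - avg f F'\<bar> \<partial>lborel)"
    unfolding F_def F'_def using s by (intro nn_integral_mono) (auto simp: indicator_def)
  also have "\<dots> \<le> ennreal (mleb F' * (M * ball_scale DIM('a) \<gamma> (2 * s)))"
    unfolding F'_def using s by (intro oscillation_ball_le) auto
  also have "\<dots> = ennreal (mleb F * (2 ^ DIM('a) * M * ball_scale DIM('a) \<gamma> (2 * s)))"
    unfolding mF' by (simp add: mult_ac)
  finally have "mleb F * \<bar>avg f F - avg f F'\<bar> \<le> mleb F * (2 ^ DIM('a) * M * ball_scale DIM('a) \<gamma> (2 * s))"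
    using mF M_ball_scale_nonneg[of "2 * s"] s by (subst (asm) ennreal_le_iff) (auto simp: mult.assoc)
  then show ?thesis
    using mF unfolding F_def F'_def by simp
qed

lemma abs_avg_dyadic_ball_diff_le:
  assumes s: "s > 0"
  shows "\<bar>avg f (ball c (2 ^ k * s)) - avg f (ball c s)\<bar>
           \<le> 2 ^ DIM('a) * M * ball_scale DIM('a) \<gamma> s * (2 ^ (k + 1) - 2)"
proof (induction k)
  case (Suc k)
  have "\<bar>avg f (ball c (2 ^ k * s)) - avg f (ball c (2 * (2 ^ k * s)))\<bar>
      \<le> 2 ^ DIM('a) * M * ball_scale DIM('a) \<gamma> (2 ^ (k + 1) * s)"
    using abs_avg_ball_double_diff_le[of "2 ^ k * s" c] s by (simp add: mult.assoc)
  also have "\<dots> \<le> 2 ^ DIM('a) * M * (2 ^ (k + 1) * ball_scale DIM('a) \<gamma> s)"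
    by (rule mult_left_mono[OF ball_scale_dyadic_le[OF s gamma_le_1]]) (use M_nonneg in simp)
  finally show ?case
    using Suc.IH by (simp add: algebra_simps)
qed simp

lemma oscillation_dyadic_ball_le:
  assumes r: "r > 0"
  shows "(\<integral>\<^sup>+y\<in>ball x0 (2 ^ (k + 1) * r). ennreal \<bar>f y - avg f (ball x0 r)\<bar> \<partial>lborel)
           \<le> ennreal (mleb (ball x0 (2 ^ (k + 1) * r)) * 2 ^ (DIM('a) + k + 3) * (M * ball_scale DIM('a) \<gamma> r))"
proof -
  define n where "n = DIM('a)"
  define E where "E = ball x0 (2 ^ (k + 1) * r)"
  define S where "S = M * ball_scale n \<gamma> r"
  define d where "d = \<bar>avg f E - avg f (ball x0 r)\<bar>"
  have \<mu>: "mleb E \<ge> 0" "emeasure lborel E = ennreal (mleb E)"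
    unfolding E_def using r by (auto simp: mleb_ball emeasure_ball_eq_mleb)
  have S: "S \<ge> 0"
    unfolding S_def n_def using r by (rule M_ball_scale_nonneg)
  have "M * ball_scale n \<gamma> (2 ^ (k + 1) * r) \<le> M * (2 ^ (k + 1) * ball_scale n \<gamma> r)"
    by (rule mult_left_mono[OF ball_scale_dyadic_le[OF r gamma_le_1] M_nonneg])
  then have scale: "M * ball_scale n \<gamma> (2 ^ (k + 1) * r) \<le> 2 ^ (k + 1) * S"
    unfolding S_def by (simp add: mult.left_commute)
  have d: "d \<le> 2 ^ n * S * (2 ^ (k + 2) - 2)"
    unfolding d_def E_def S_def n_def using abs_avg_dyadic_ball_diff_le[OF r, of x0 "k + 1"]
    by (simp add: mult.assoc)
  have "(\<integral>\<^sup>+y\<in>E. ennreal \<bar>f y - avg f (ball x0 r)\<bar> \<partial>lborel)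
      \<le> (\<integral>\<^sup>+y\<in>E. ennreal \<bar>f y - avg f E\<bar> \<partial>lborel) + ennreal d * emeasure lborel E"
    unfolding d_def E_def by (rule nn_integral_abs_diff_le_add) auto
  also have "\<dots> \<le> ennreal (mleb E * (M * ball_scale n \<gamma> (2 ^ (k + 1) * r))) + ennreal d * ennreal (mleb E)"
    unfolding E_def n_def using r \<mu> by (intro add_mono oscillation_ball_le) (auto simp: E_def)
  also have "\<dots> = ennreal (mleb E * (M * ball_scale n \<gamma> (2 ^ (k + 1) * r)) + d * mleb E)"
    using \<mu> M_ball_scale_nonneg[of "2 ^ (k + 1) * r"] r unfolding d_def n_def
    by (simp add: ennreal_mult''[symmetric] ennreal_plus[symmetric] del: ennreal_plus)
  also have "\<dots> \<le> ennreal (mleb E * 2 ^ (n + k + 3) * S)"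
  proof (intro ennreal_leI)
    have "mleb E * S * (2 ^ (k + 1) + 2 ^ n * (2 ^ (k + 2) - 2)) \<le> mleb E * S * 2 ^ (n + k + 3)"
      using \<mu> S by (intro mult_left_mono dyadic_telescope_le) auto
    moreover have "mleb E * (M * ball_scale n \<gamma> (2 ^ (k + 1) * r)) + d * mleb E
        \<le> mleb E * S * (2 ^ (k + 1) + 2 ^ n * (2 ^ (k + 2) - 2))"
      using mult_left_mono[OF scale \<mu>(1)] mult_right_mono[OF d \<mu>(1)] by (simp add: algebra_simps)
    ultimately show "mleb E * (M * ball_scale n \<gamma> (2 ^ (k + 1) * r)) + d * mleb E \<le> mleb E * 2 ^ (n + k + 3) * S"
      by (simp add: mult_ac)
  qed
  finally show ?thesis
    unfolding E_def S_def n_def .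
qed

lemma weighted_oscillation_dyadic_ball_le:
  assumes r: "r > 0"
  shows "ennreal (gauss_dyadic_const DIM('a) A * (1 / 4 ^ (DIM('a) + 2)) ^ k)
           * (\<integral>\<^sup>+y\<in>ball x0 (2 ^ (k + 1) * r). ennreal \<bar>f y - avg f (ball x0 r)\<bar> \<partial>lborel)
         \<le> ennreal (gauss_oscillation_const DIM('a) A * r ^ DIM('a) * (M * ball_scale DIM('a) \<gamma> r)
                    * (1 / 2) ^ (k + 1))"
proof -
  define n where "n = DIM('a)"
  define D where "D = gauss_dyadic_const n A"
  define S where "S = M * ball_scale n \<gamma> r"
  have D: "D \<ge> 1" unfolding D_def gauss_dyadic_const_def by simp
  have S: "S \<ge> 0" unfolding S_def n_def using r by (rule M_ball_scale_nonneg)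
  have "ennreal (D * (1 / 4 ^ (n + 2)) ^ k)
        * (\<integral>\<^sup>+y\<in>ball x0 (2 ^ (k + 1) * r). ennreal \<bar>f y - avg f (ball x0 r)\<bar> \<partial>lborel)
      \<le> ennreal (D * (1 / 4 ^ (n + 2)) ^ k)
        * ennreal (mleb (ball x0 (2 ^ (k + 1) * r)) * 2 ^ (n + k + 3) * S)"
    using oscillation_dyadic_ball_le[OF r, of x0 k] unfolding n_def S_def
    by (intro mult_left_mono) auto
  also have "\<dots> = ennreal (D * unit_ball_vol n * r ^ n * S
      * ((1 / 4 ^ (n + 2)) ^ k * (2 ^ (k + 1)) ^ n * 2 ^ (n + k + 3)))"
    using D S r unfolding n_def
    by (simp add: ennreal_mult''[symmetric] mleb_ball power_mult_distrib mult_ac)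
  also have "\<dots> \<le> ennreal (D * unit_ball_vol n * r ^ n * S * (2 ^ (2 * n + 3) * (1 / 2) ^ k))"
    using D S r by (intro ennreal_leI mult_left_mono dyadic_weight_le) auto
  also have "\<dots> = ennreal (gauss_oscillation_const n A * r ^ n * S * (1 / 2) ^ (k + 1))"
    unfolding gauss_oscillation_const_def D_def by (simp add: power_add mult_ac)
  finally show ?thesis
    unfolding n_def D_def S_def .
qed

lemma nn_integral_gauss_oscillation_le:
  assumes A: "A > 0" and r: "r > 0" and x: "x \<in> ball x0 r"
  shows "(\<integral>\<^sup>+y. ennreal (exp (- A * (dist x y)\<^sup>2 / r\<^sup>2)) * ennreal \<bar>f y - avg f (ball x0 r)\<bar> \<partial>lborel)
           \<le> ennreal (gauss_oscillation_const DIM('a) A * r ^ DIM('a) * (M * ball_scale DIM('a) \<gamma> r))"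
proof -
  define T where "T = gauss_oscillation_const DIM('a) A * r ^ DIM('a) * (M * ball_scale DIM('a) \<gamma> r)"
  have T: "T \<ge> 0"
    unfolding T_def using r gauss_oscillation_const_nonneg M_ball_scale_nonneg[OF r] by simp
  have "(\<integral>\<^sup>+y. ennreal (exp (- A * (dist x y)\<^sup>2 / r\<^sup>2)) * ennreal \<bar>f y - avg f (ball x0 r)\<bar> \<partial>lborel)
      \<le> (\<Sum>k. ennreal (gauss_dyadic_const DIM('a) A * (1 / 4 ^ (DIM('a) + 2)) ^ k)
          * (\<integral>\<^sup>+y\<in>ball x0 (2 ^ (k + 1) * r). ennreal \<bar>f y - avg f (ball x0 r)\<bar> \<partial>lborel))"
    by (rule nn_integral_gauss_le_dyadic_sum[OF _ A r x]) simp
  also have "\<dots> \<le> (\<Sum>k. ennreal (T * (1 / 2) ^ (k + 1)))"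
    unfolding T_def by (intro suminf_le weighted_oscillation_dyadic_ball_le[OF r] summableI)
  also have "\<dots> = ennreal (\<Sum>k. T * (1 / 2) ^ (k + 1))"
    using T by (intro suminf_ennreal2) (auto intro: summable_mult summable_geometric)
  also have "(\<Sum>k. T * (1 / 2::real) ^ (k + 1)) = T"
    using suminf_mult[OF summable_geometric[of "1 / 2 :: real"], of "T / 2"]
      suminf_geometric[of "1 / 2 :: real"]
    by simp
  finally show ?thesis
    unfolding T_def .
qed

lemma kernel_oscillation_le:
  fixes K :: "'a \<Rightarrow> real"
  assumes C: "C \<ge> 0" and A: "A > 0" and r: "r > 0" and x: "x \<in> ball x0 r"
    and K: "\<And>y. \<bar>K y\<bar> \<le> C * r powr (- real DIM('a)) * exp (- A * (dist x y)\<^sup>2 / r\<^sup>2)"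
  shows "(\<integral>\<^sup>+y. ennreal (\<bar>K y\<bar> * \<bar>f y - avg f (ball x0 r)\<bar>) \<partial>lborel)
           \<le> ennreal (C * gauss_oscillation_const DIM('a) A * (M * ball_scale DIM('a) \<gamma> r))"
proof -
  define c0 where "c0 = avg f (ball x0 r)"
  define a where "a = C * r powr (- real DIM('a))"
  have a: "a \<ge> 0" unfolding a_def using C by simp
  have "(\<integral>\<^sup>+y. ennreal (\<bar>K y\<bar> * \<bar>f y - c0\<bar>) \<partial>lborel)
      \<le> (\<integral>\<^sup>+y. ennreal a * (ennreal (exp (- A * (dist x y)\<^sup>2 / r\<^sup>2)) * ennreal \<bar>f y - c0\<bar>) \<partial>lborel)"
  proof (intro nn_integral_mono)
    fix y
    have "\<bar>K y\<bar> * \<bar>f y - c0\<bar> \<le> a * exp (- A * (dist x y)\<^sup>2 / r\<^sup>2) * \<bar>f y - c0\<bar>"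
      using K[of y] unfolding a_def by (intro mult_right_mono) auto
    then show "ennreal (\<bar>K y\<bar> * \<bar>f y - c0\<bar>)
        \<le> ennreal a * (ennreal (exp (- A * (dist x y)\<^sup>2 / r\<^sup>2)) * ennreal \<bar>f y - c0\<bar>)"
      using a by (simp add: ennreal_mult''[symmetric] ennreal_leI mult.assoc)
  qed
  also have "\<dots> = ennreal a
      * (\<integral>\<^sup>+y. ennreal (exp (- A * (dist x y)\<^sup>2 / r\<^sup>2)) * ennreal \<bar>f y - c0\<bar> \<partial>lborel)"
    by (rule nn_integral_cmult) simp
  also have "\<dots> \<le> ennreal a
      * ennreal (gauss_oscillation_const DIM('a) A * r ^ DIM('a) * (M * ball_scale DIM('a) \<gamma> r))"
    unfolding c0_def by (intro mult_left_mono nn_integral_gauss_oscillation_le[OF A r x]) auto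
  also have "\<dots> = ennreal (C * gauss_oscillation_const DIM('a) A * (M * ball_scale DIM('a) \<gamma> r))"
  proof -
    have "r powr (- real DIM('a)) * r ^ DIM('a) = 1"
      using r by (simp add: powr_minus powr_realpow[symmetric])
    then have "a * (gauss_oscillation_const DIM('a) A * r ^ DIM('a) * (M * ball_scale DIM('a) \<gamma> r))
        = C * gauss_oscillation_const DIM('a) A * (M * ball_scale DIM('a) \<gamma> r)"
      unfolding a_def by (metis (no_types, lifting) mult.assoc mult.commute mult_1_right)
    then show ?thesis
      by (simp only: ennreal_mult'[OF a, symmetric])
  qed
  finally show ?thesis
    unfolding c0_def .
qed

lemma abs_diff_kernel_mean_le:
  fixes K :: "'a \<Rightarrow> real"
  assumes C: "C \<ge> 0" and A: "A > 0" and r: "r > 0" and x: "x \<in> ball x0 r"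
    and [measurable]: "K \<in> borel_measurable lborel"
    and K: "\<And>y. \<bar>K y\<bar> \<le> C * (r\<^sup>2) powr (- real DIM('a) / 2) * exp (- A * (dist x y)\<^sup>2 / r\<^sup>2)"
    and one: "(\<integral>y. K y \<partial>lborel) = 1"
  shows "\<bar>f x - (\<integral>y. K y * f y \<partial>lborel)\<bar>
           \<le> \<bar>f x - avg f (ball x0 r)\<bar> + C * gauss_oscillation_const DIM('a) A * (M * ball_scale DIM('a) \<gamma> r)"
proof -
  have "\<bar>(\<integral>y. K y * f y \<partial>lborel) - avg f (ball x0 r)\<bar>
      \<le> C * gauss_oscillation_const DIM('a) A * (M * ball_scale DIM('a) \<gamma> r)"
  proof (rule abs_integral_kernel_diff_le[OF _ _ one])
    show "(\<integral>\<^sup>+y. ennreal (\<bar>K y\<bar> * \<bar>f y - avg f (ball x0 r)\<bar>) \<partial>lborel)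
        \<le> ennreal (C * gauss_oscillation_const DIM('a) A * (M * ball_scale DIM('a) \<gamma> r))"
      by (rule kernel_oscillation_le[OF C A r x K[unfolded power2_powr_neg_half[OF r]]])
    show "0 \<le> C * gauss_oscillation_const DIM('a) A * (M * ball_scale DIM('a) \<gamma> r)"
      using C gauss_oscillation_const_nonneg M_ball_scale_nonneg[OF r] by simp
  qed simp_all
  then show ?thesis
    by linarith
qed

lemma AE_abs_diff_heat_le:
  fixes P :: "real \<Rightarrow> 'a \<Rightarrow> 'a \<Rightarrow> real" and x0 :: 'a
  assumes C: "C \<ge> 0" and A: "A > 0" and r: "r > 0"
    and meas: "(\<lambda>(x, y). P (r\<^sup>2) x y) \<in> borel_measurable (lborel \<Otimes>\<^sub>M lborel)"
    and gauss: "\<And>x y. \<bar>P (r\<^sup>2) x y\<bar>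
                  \<le> C * (r\<^sup>2) powr (- real DIM('a) / 2) * exp (- A * (dist x y)\<^sup>2 / r\<^sup>2)"
    and conserv: "AE x in lborel. (\<integral>y. P (r\<^sup>2) x y \<partial>lborel) = 1"
  shows "AE x in lborel. x \<in> ball x0 r \<longrightarrow>
           \<bar>f x - heat P (r\<^sup>2) f x\<bar> \<le> \<bar>f x - avg f (ball x0 r)\<bar>
             + C * gauss_oscillation_const DIM('a) A * (M * ball_scale DIM('a) \<gamma> r)"
  using conserv
proof eventually_elim
  case (elim x)
  have "(\<lambda>y. P (r\<^sup>2) x y) \<in> borel_measurable lborel"
    using measurable_Pair2[OF meas, of x] by simp
  with elim show ?case
    unfolding heat_def using gauss by (auto intro: abs_diff_kernel_mean_le[OF C A r])
qed

lemma ball_L_oscillation_le: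
  fixes P :: "real \<Rightarrow> 'a \<Rightarrow> 'a \<Rightarrow> real" and x0 :: 'a
  assumes C: "C \<ge> 0" and A: "A > 0" and r: "r > 0"
    and meas: "(\<lambda>(x, y). P (r\<^sup>2) x y) \<in> borel_measurable (lborel \<Otimes>\<^sub>M lborel)"
    and gauss: "\<And>x y. \<bar>P (r\<^sup>2) x y\<bar>
                  \<le> C * (r\<^sup>2) powr (- real DIM('a) / 2) * exp (- A * (dist x y)\<^sup>2 / r\<^sup>2)"
    and conserv: "AE x in lborel. (\<integral>y. P (r\<^sup>2) x y \<partial>lborel) = 1"
  shows "ennreal (mleb (ball x0 r) powr (- \<gamma> / DIM('a))) *
           enn_root p (ennreal (1 / mleb (ball x0 r)) *
             (\<integral>\<^sup>+x\<in>ball x0 r. ennreal (\<bar>f x - heat P (tB (ball x0 r)) f x\<bar> powr p) \<partial>lborel))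
         \<le> ennreal (4 * (1 + C * gauss_oscillation_const DIM('a) A)) * ennreal M"
proof -
  define \<mu> where "\<mu> = mleb (ball x0 r)"
  define S where "S = M * ball_scale DIM('a) \<gamma> r"
  define Y where "Y = C * gauss_oscillation_const DIM('a) A * S"
  have \<mu>: "\<mu> > 0" unfolding \<mu>_def using r by (rule mleb_ball_pos)
  have S: "S \<ge> 0" unfolding S_def using r by (rule M_ball_scale_nonneg)
  have Y: "Y \<ge> 0" unfolding Y_def using C S gauss_oscillation_const_nonneg by simp
  have "enn_root p (ennreal (1 / \<mu>) *
          (\<integral>\<^sup>+x\<in>ball x0 r. ennreal (\<bar>f x - heat P (tB (ball x0 r)) f x\<bar> powr p) \<partial>lborel))
      \<le> ennreal (4 * (S + Y))"
    using AE_abs_diff_heat_le[where P = P, OF C A r meas gauss conserv, of x0] oscillation_powr_ball_le[OF r, of x0]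
      p_ge_1 S Y \<mu> emeasure_ball_eq_mleb[of r x0] r
    unfolding \<mu>_def S_def Y_def tB_ball[OF r]
    by (intro enn_root_average_le_of_AE_le_add[where g = "\<lambda>x. f x - avg f (ball x0 r)"])
       (auto simp: mult.assoc)
  then have "ennreal (\<mu> powr (- \<gamma> / DIM('a))) * enn_root p (ennreal (1 / \<mu>) *
          (\<integral>\<^sup>+x\<in>ball x0 r. ennreal (\<bar>f x - heat P (tB (ball x0 r)) f x\<bar> powr p) \<partial>lborel))
      \<le> ennreal (\<mu> powr (- \<gamma> / DIM('a)) * (4 * (S + Y)))"
    using S Y by (simp add: mult_left_mono ennreal_mult')
  also have "\<mu> powr (- \<gamma> / DIM('a)) * (4 * (S + Y)) = 4 * (1 + C * gauss_oscillation_const DIM('a) A) * M"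
    using mleb_ball_powr_neg_mult_ball_scale[OF r, of x0 \<gamma>]
    unfolding \<mu>_def Y_def S_def by (simp add: algebra_simps)
  finally show ?thesis
    using M_nonneg C gauss_oscillation_const_nonneg unfolding \<mu>_def
    by (simp add: ennreal_mult'')
qed

lemma campanato_L_norm_le:
  fixes P :: "real \<Rightarrow> 'a \<Rightarrow> 'a \<Rightarrow> real"
  assumes C: "C \<ge> 0" and A: "A > 0"
    and meas: "\<And>t. t > 0 \<Longrightarrow> (\<lambda>(x, y). P t x y) \<in> borel_measurable (lborel \<Otimes>\<^sub>M lborel)"
    and gauss: "\<And>t x y. t > 0 \<Longrightarrow>
                  \<bar>P t x y\<bar> \<le> C * t powr (- real DIM('a) / 2) * exp (- A * (dist x y)\<^sup>2 / t)"
    and conserv: "\<And>t. t > 0 \<Longrightarrow> AE x in lborel. (\<integral>y. P t x y \<partial>lborel) = 1"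
  shows "campanato_L_norm P p \<gamma> f \<le> ennreal (4 * (1 + C * gauss_oscillation_const DIM('a) A)) * ennreal M"
  unfolding campanato_L_norm_def
proof (rule SUP_least)
  fix B :: "'a set"
  assume "B \<in> balls"
  then obtain x0 r where B: "B = ball x0 r" and r: "r > 0"
    unfolding balls_def by blast
  then have t: "r\<^sup>2 > 0" by simp
  show "ennreal (mleb B powr (- \<gamma> / DIM('a))) *
      enn_root p (ennreal (1 / mleb B) * (\<integral>\<^sup>+x\<in>B. ennreal (\<bar>f x - heat P (tB B) f x\<bar> powr p) \<partial>lborel))
    \<le> ennreal (4 * (1 + C * gauss_oscillation_const DIM('a) A)) * ennreal M"
    unfolding B by (rule ball_L_oscillation_le[where P = P, OF C A r meas[OF t] gauss[OF t] conserv[OF t]])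
qed

end

theorem lemma2p1:
  fixes P :: "real \<Rightarrow> 'a::euclidean_space \<Rightarrow> 'a \<Rightarrow> real"
    and p \<gamma> :: real
  assumes "1 \<le> p"
    and "- real DIM('a) / p \<le> \<gamma>" and "\<gamma> \<le> 1" and "\<gamma> \<noteq> 0"
    and meas: "\<And>t. t > 0 \<Longrightarrow> (\<lambda>(x, y). P t x y) \<in> borel_measurable (lborel \<Otimes>\<^sub>M lborel)"
    and gauss: "\<exists>C A. C > 0 \<and> A > 0 \<and> (\<forall>t>0. \<forall>x y.
                 \<bar>P t x y\<bar> \<le> C * t powr (- real DIM('a) / 2) * exp (- A * (dist x y)\<^sup>2 / t))"
    and conserv: "\<And>t. t > 0 \<Longrightarrow> AE x in lborel. (\<integral>y. P t x y \<partial>lborel) = 1"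
  shows "\<exists>C>0. \<forall>f \<in> Campanato p \<gamma>.
           campanato_L_norm P p \<gamma> f \<le> ennreal C * campanato_norm p \<gamma> f"
proof -
  obtain C A where C: "C > 0" and A: "A > 0"
    and bound: "\<And>t x y. t > 0 \<Longrightarrow>
                  \<bar>P t x y\<bar> \<le> C * t powr (- real DIM('a) / 2) * exp (- A * (dist x y)\<^sup>2 / t)"
    using gauss by blast
  define K where "K = 4 * (1 + C * gauss_oscillation_const DIM('a) A)"
  have "K > 0"
    unfolding K_def using C gauss_oscillation_const_nonneg by (simp add: add_pos_nonneg)
  moreover have "campanato_L_norm P p \<gamma> f \<le> ennreal K * campanato_norm p \<gamma> f"
    if "f \<in> Campanato p \<gamma>" for f
  proof -
    from that have "locally_integrable f" and finite: "campanato_norm p \<gamma> f < top"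
      unfolding Campanato_def by auto
    then interpret campanato_bounded f p \<gamma> "enn2real (campanato_norm p \<gamma> f)"
      using assms(1,3) by unfold_locales auto
    show ?thesis
      using campanato_L_norm_le[OF less_imp_le[OF C] A meas bound conserv] finite
      unfolding K_def by simp
  qed
  ultimately show ?thesis
    by blast
qed

end
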